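(* Let $F$ be an order continuous Banach lattice, $E$ a Banach space and $T\in\mathcal{L}(F,E)$. The following are equivalent: (i) $T$ is DNS, i.e. there is no disjoint sequence $(f_n)\subset\mathrm{S}_F$ with $\|Tf_n\|\to0$; (ii) $T$ is strictly DNS, i.e. there is $\delta>0$ such that no disjoint sequence $(f_n)\subset\mathrm{S}_F$ satisfies $\|Tf_n\|\le\delta$ for all $n$; (iii) there is no sequence (equivalently, no net) in $\mathrm{S}_F$ which is un-null and satisfies $\|Tf_i\|\to0$; (iv) there are $\varepsilon,\delta>0$ and $h\in F_+$ such that $\|Tf\|\ge\delta$ whenever $f\in\mathrm{S}_F$ and $\||f|\wedge h\|<\varepsilon$. Consequently, the set of DNS operators is open in $\mathcal{L}(F,E)$.
   Context: $\mathrm{S}_F$ is the unit sphere of $F$; $x,y$ disjoint means $|x|\wedge|y|=0$. The un-topology on $F$ is the linear topology with zero neighborhood base $\{f\in F:\||f|\wedge h\|<\varepsilon\}$, $h\in F_+$, $\varepsilon>0$. *)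

theory Defs
  imports "HOL-Analysis.Analysis"
begin

definition lmod :: "'a::{lattice, uminus} \<Rightarrow> 'a" where
  "lmod x = sup x (- x)"

class banach_lattice = banach + ordered_real_vector + lattice +
  assumes norm_lattice_mono: "sup x (- x) \<le> sup y (- y) \<Longrightarrow> norm x \<le> norm y"

text \<open>Order continuity: every downward directed net of positive elements with
  infimum 0 (the net indexed by itself) converges to 0 in norm.\<close>
definition order_continuous :: "'a::banach_lattice itself \<Rightarrow> bool" where
  "order_continuous _ \<longleftrightarrow>
     (\<forall>A :: 'a set. A \<noteq> {}
        \<and> (\<forall>x\<in>A. \<forall>y\<in>A. \<exists>z\<in>A. z \<le> x \<and> z \<le> y)
        \<and> (\<forall>x\<in>A. 0 \<le> x)
        \<and> (\<forall>z. (\<forall>x\<in>A. z \<le> x) \<longrightarrow> z \<le> 0)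
        \<longrightarrow> (\<forall>\<epsilon>>0. \<exists>x\<in>A. \<forall>y\<in>A. y \<le> x \<longrightarrow> norm y < \<epsilon>))"

definition disjoint_elems :: "'a::banach_lattice \<Rightarrow> 'a \<Rightarrow> bool" where
  "disjoint_elems x y \<longleftrightarrow> inf (lmod x) (lmod y) = 0"

definition disjoint_seq :: "(nat \<Rightarrow> 'a::banach_lattice) \<Rightarrow> bool" where
  "disjoint_seq f \<longleftrightarrow> (\<forall>n m. n \<noteq> m \<longrightarrow> disjoint_elems (f n) (f m))"

definition un_null :: "('i \<Rightarrow> 'a::banach_lattice) \<Rightarrow> 'i filter \<Rightarrow> bool" where
  "un_null x G \<longleftrightarrow>
     (\<forall>h. 0 \<le> h \<longrightarrow> (\<forall>\<epsilon>>0. eventually (\<lambda>i. norm (inf (lmod (x i)) h) < \<epsilon>) G))"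

definition DNS :: "('a::banach_lattice \<Rightarrow> 'b::real_normed_vector) \<Rightarrow> bool" where
  "DNS T \<longleftrightarrow> \<not> (\<exists>f :: nat \<Rightarrow> 'a. (\<forall>n. norm (f n) = 1) \<and> disjoint_seq f
                    \<and> (\<lambda>n. norm (T (f n))) \<longlonglongrightarrow> 0)"

definition strictly_DNS :: "('a::banach_lattice \<Rightarrow> 'b::real_normed_vector) \<Rightarrow> bool" where
  "strictly_DNS T \<longleftrightarrow> (\<exists>\<delta>>0. \<not> (\<exists>f :: nat \<Rightarrow> 'a. (\<forall>n. norm (f n) = 1) \<and> disjoint_seq f
                    \<and> (\<forall>n. norm (T (f n)) \<le> \<delta>)))"

end

theory Submission
  imports Defs "HOL-Library.Lattice_Algebras"
begin

text \<open>If (iv) fails, one picks unit vectors \<open>f\<^sub>n\<close> with \<open>\<parallel>T f\<^sub>n\<parallel>\<close> small and \<open>|f\<^sub>n|\<close> almost disjoint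
  from \<open>|f\<^sub>0| + \<dots> + |f\<^sub>n\<^sub>-\<^sub>1|\<close>; removing from each \<open>f\<^sub>n\<close> its truncation at a suitable small level
  makes the sequence exactly disjoint at a cost tending to 0, which contradicts DNS. Conversely,
  order continuity forces every disjoint sequence to be un-null, so (iv) excludes disjoint
  sequences on which \<open>\<parallel>T f\<parallel>\<close> is small; (iv) is stable under perturbations of \<open>T\<close> of norm below \<open>\<delta>\<close>.\<close>

subclass (in banach_lattice) lattice_ab_group_add ..

section \<open>Lattice-ordered groups\<close>

lemma lmod_upper: "(x::'a::lattice_ab_group_add) \<le> lmod x"
  by (simp add: lmod_def)

lemma lmod_upper_minus: "- (x::'a::lattice_ab_group_add) \<le> lmod x"
  by (simp add: lmod_def)

lemma lmod_least: "(x::'a::lattice_ab_group_add) \<le> d \<Longrightarrow> - x \<le> d \<Longrightarrow> lmod x \<le> d"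
  by (simp add: lmod_def)

lemma lmod_nonneg: "0 \<le> lmod (x::'a::lattice_ab_group_add)"
proof -
  have "x + - x \<le> lmod x + lmod x"
    by (intro add_mono lmod_upper lmod_upper_minus)
  then show ?thesis
    by simp
qed

lemma lmod_of_nonneg: "0 \<le> (x::'a::lattice_ab_group_add) \<Longrightarrow> lmod x = x"
  unfolding lmod_def by (metis le_minus_iff order_trans sup.absorb1 neg_le_0_iff_le)

lemma lmod_minus: "lmod (- (x::'a::lattice_ab_group_add)) = lmod x"
  unfolding lmod_def by (simp add: sup_commute)

lemma sup_diff_distrib: "sup a b - (c::'a::lattice_ab_group_add) = sup (a - c) (b - c)"
  by (simp only: diff_conv_add_uminus add_sup_distrib_right)

lemma inf_pos_part_neg_part: "inf (sup (x::'a::lattice_ab_group_add) 0) (sup (- x) 0) = 0"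
proof -
  have "sup (- x) 0 = sup x 0 + - x"
    by (metis sup_diff_distrib diff_conv_add_uminus diff_self sup_commute diff_0)
  then have "inf (sup x 0) (sup (- x) 0) = sup x 0 + inf 0 (- x)"
    by (simp only: add_inf_distrib_left) simp
  moreover have "inf 0 (- x) = - sup x 0"
    by (simp add: neg_sup_eq_inf inf_commute)
  ultimately show ?thesis
    by (metis add.right_inverse)
qed

lemma inf_add_le_add_inf:
  assumes "0 \<le> a" "0 \<le> b" "0 \<le> (c::'a::lattice_ab_group_add)"
  shows "inf a (b + c) \<le> inf a b + inf a c"
proof -
  have "inf a (b + c) \<le> inf (inf (a + a) (a + c)) (inf (b + a) (b + c))"
  proof (intro le_infI)
    show "inf a (b + c) \<le> a + a" "inf a (b + c) \<le> a + c"
      using assms by (meson add_increasing2 inf.coboundedI1 order_refl)+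
    show "inf a (b + c) \<le> b + a"
      using assms by (meson add_increasing inf.coboundedI1 order_refl)
  qed simp
  also have "\<dots> = inf a b + inf a c"
    by (simp add: add_inf_distrib_left add_inf_distrib_right inf_aci)
  finally show ?thesis .
qed

lemma lmod_inf_diff_le: "lmod (inf x a - inf y a) \<le> lmod ((x::'a::lattice_ab_group_add) - y)"
proof -
  have one_side: "inf x a - inf y a \<le> lmod (x - y)" for x y
  proof -
    have "x \<le> y + lmod (x - y)"
      using lmod_upper[of "x - y"] by (simp add: algebra_simps)
    then have "inf x a \<le> inf (y + lmod (x - y)) (a + lmod (x - y))"
      using lmod_nonneg[of "x - y"] by (metis add_increasing2 inf_mono order_refl)
    also have "\<dots> = inf y a + lmod (x - y)"
      by (simp add: add_inf_distrib_right)
    finally show ?thesis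
      by (metis diff_le_eq add.commute)
  qed
  show ?thesis
    using one_side[of x y] one_side[of y x] by (intro lmod_least) (metis lmod_minus minus_diff_eq)+
qed

definition lattice_trunc :: "'a::lattice_ab_group_add \<Rightarrow> 'a \<Rightarrow> 'a" where
  "lattice_trunc f c = sup (inf f c) (- c)"

lemma lmod_lattice_trunc_le:
  assumes "0 \<le> (c::'a::lattice_ab_group_add)"
  shows "lmod (lattice_trunc f c) \<le> inf (lmod f) c"
proof (rule lmod_least)
  have "- c \<le> lmod f" "- c \<le> c"
    using assms lmod_nonneg[of f] by (meson neg_le_0_iff_le order_trans)+
  moreover have "inf f c \<le> lmod f"
    using lmod_upper[of f] inf.coboundedI1 by blast
  ultimately show "lattice_trunc f c \<le> inf (lmod f) c"
    unfolding lattice_trunc_def by simp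
  have "- lattice_trunc f c = inf (sup (- f) (- c)) c"
    unfolding lattice_trunc_def by (simp add: neg_sup_eq_inf neg_inf_eq_sup inf_commute sup_commute)
  moreover have "sup (- f) (- c) \<le> lmod f"
    using lmod_upper_minus[of f] \<open>- c \<le> lmod f\<close> by simp
  ultimately show "- lattice_trunc f c \<le> inf (lmod f) c"
    by (simp add: inf.coboundedI1)
qed

lemma lmod_diff_lattice_trunc_le:
  assumes "0 \<le> (c::'a::lattice_ab_group_add)"
  shows "lmod (f - lattice_trunc f c) \<le> sup (lmod f - c) 0"
proof (rule lmod_least)
  have "f - lattice_trunc f c \<le> f - inf f c"
    unfolding lattice_trunc_def by (simp add: diff_mono)
  also have "\<dots> = sup (f - c) 0"
    by (simp add: diff_inf_eq_sup add_sup_distrib_left sup_commute)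
  also have "\<dots> \<le> sup (lmod f - c) 0"
    using lmod_upper[of f] by (meson diff_right_mono sup.mono order_refl)
  finally show "f - lattice_trunc f c \<le> sup (lmod f - c) 0" .
  have "- (f - lattice_trunc f c) = sup (inf f c - f) (- c - f)"
    unfolding lattice_trunc_def by (simp add: sup_diff_distrib)
  also have "\<dots> \<le> sup 0 (- f - c)"
    by (rule sup.mono) (simp_all add: diff_le_eq inf.coboundedI1)
  also have "\<dots> \<le> sup (lmod f - c) 0"
    using lmod_upper_minus[of f] by (metis diff_right_mono sup.mono order_refl sup_commute)
  finally show "- (f - lattice_trunc f c) \<le> sup (lmod f - c) 0" .
qed

lemma inf_eq_0_if_le_pos_parts:
  assumes "0 \<le> x" "0 \<le> y" "x \<le> sup (a - inf a b) 0" "y \<le> sup (b - a) 0"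
  shows "inf x (y::'a::lattice_ab_group_add) = 0"
proof -
  have "a - inf a b = sup 0 (a - b)"
    by (simp add: diff_inf_eq_sup add_sup_distrib_left)
  then have "sup (a - inf a b) 0 = sup (a - b) 0"
    by (simp add: sup_commute)
  then have "inf x y \<le> inf (sup (a - b) 0) (sup (- (a - b)) 0)"
    using assms by (metis inf_mono minus_diff_eq)
  then have "inf x y \<le> 0"
    using inf_pos_part_neg_part by metis
  then show ?thesis
    using assms by (intro antisym) simp_all
qed

lemma disjoint_diff_lattice_trunc:
  fixes f c :: "nat \<Rightarrow> 'a::lattice_ab_group_add"
  assumes c_nonneg: "\<And>n. 0 \<le> c n"
    and overlap_le: "\<And>n m. n < m \<Longrightarrow> inf (lmod (f n)) (lmod (f m)) \<le> c n"
    and earlier_le: "\<And>n m. n < m \<Longrightarrow> lmod (f n) \<le> c m"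
    and "n \<noteq> m"
  shows "inf (lmod (f n - lattice_trunc (f n) (c n))) (lmod (f m - lattice_trunc (f m) (c m))) = 0"
proof -
  let ?g = "\<lambda>n. f n - lattice_trunc (f n) (c n)"
  have lmod_g_le: "lmod (?g n) \<le> sup (lmod (f n) - d) 0" if "d \<le> c n" for n d
    using lmod_diff_lattice_trunc_le[OF c_nonneg, of "f n" n] that
    by (meson diff_left_mono order.trans order_refl sup.mono)
  have lt: "inf (lmod (?g n)) (lmod (?g m)) = 0" if "n < m" for n m
    by (rule inf_eq_0_if_le_pos_parts[OF lmod_nonneg lmod_nonneg lmod_g_le lmod_g_le])
      (simp_all add: that overlap_le earlier_le)
  show ?thesis
    using lt[of n m] lt[of m n] \<open>n \<noteq> m\<close> by (metis inf_commute linorder_neq_iff)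
qed

lemma inf_sum_disjoint_eq_0:
  fixes u :: "nat \<Rightarrow> 'a::lattice_ab_group_add"
  assumes nonneg: "\<And>n. 0 \<le> u n" and disj: "\<And>n m. n \<noteq> m \<Longrightarrow> inf (u n) (u m) = 0"
    and "finite F" "n \<notin> F"
  shows "inf (u n) (sum u F) = 0"
  using \<open>finite F\<close> \<open>n \<notin> F\<close>
proof (induction F rule: finite_induct)
  case empty
  then show ?case
    using nonneg[of n] by (simp add: inf.absorb2)
next
  case (insert m F)
  have "inf (u n) (sum u (insert m F)) \<le> inf (u n) (u m) + inf (u n) (sum u F)"
    using insert.hyps by (simp add: inf_add_le_add_inf nonneg sum_nonneg)
  also have "\<dots> = 0"
    using insert disj[of n m] by simp
  finally show ?case
    using nonneg by (intro antisym) (simp_all add: sum_nonneg)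
qed

lemma sum_disjoint_le:
  fixes u :: "nat \<Rightarrow> 'a::lattice_ab_group_add"
  assumes nonneg: "\<And>n. 0 \<le> u n" and disj: "\<And>n m. n \<noteq> m \<Longrightarrow> inf (u n) (u m) = 0"
    and le: "\<And>n. u n \<le> h" and "0 \<le> h" and "finite F"
  shows "sum u F \<le> h"
  using \<open>finite F\<close>
proof (induction F rule: finite_induct)
  case empty
  then show ?case
    using \<open>0 \<le> h\<close> by simp
next
  case (insert m F)
  have "sum u (insert m F) = sup (u m) (sum u F) + inf (u m) (sum u F)"
    using insert.hyps by (simp add: add_eq_inf_sup[of "u m"])
  also have "\<dots> = sup (u m) (sum u F)"
    using inf_sum_disjoint_eq_0[OF nonneg disj insert.hyps] by simp
  also have "\<dots> \<le> h"
    using insert.IH le by simp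
  finally show ?case .
qed

section \<open>Banach lattices\<close>

lemma norm_le_if_lmod_le: "lmod (x::'a::banach_lattice) \<le> d \<Longrightarrow> norm x \<le> norm d"
  using norm_lattice_mono[of x d] lmod_of_nonneg[OF order.trans[OF lmod_nonneg, of x d]]
  by (simp add: lmod_def)

lemma norm_mono_nonneg: "0 \<le> (x::'a::banach_lattice) \<Longrightarrow> x \<le> y \<Longrightarrow> norm x \<le> norm y"
  by (rule norm_le_if_lmod_le) (simp add: lmod_of_nonneg)

lemma norm_lmod: "norm (lmod (x::'a::banach_lattice)) = norm x"
proof (rule antisym)
  have "sup (lmod x) (- lmod x) = lmod x"
    using lmod_of_nonneg[OF lmod_nonneg[of x]] unfolding lmod_def .
  then show "norm (lmod x) \<le> norm x"
    by (intro norm_lattice_mono) (simp add: lmod_def)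
qed (rule norm_le_if_lmod_le, simp)

lemma closed_atLeast_lattice: "closed {x::'a::banach_lattice. a \<le> x}"
proof -
  have "1-lipschitz_on UNIV (\<lambda>x::'a. inf x a)"
  proof (rule lipschitz_onI)
    fix x y :: 'a
    have "norm (inf x a - inf y a) \<le> norm (lmod (x - y))"
      by (rule norm_le_if_lmod_le[OF lmod_inf_diff_le])
    then show "dist (inf x a) (inf y a) \<le> 1 * dist x y"
      by (simp add: dist_norm norm_lmod)
  qed simp
  then have "continuous_on UNIV (\<lambda>x::'a. inf x a)"
    by (rule lipschitz_on_continuous_on)
  moreover have "{x::'a. a \<le> x} = {x. inf x a = a}"
    by (simp add: inf.absorb_iff2)
  ultimately show ?thesis
    by (simp add: closed_Collect_eq)
qed

lemma scaleR_sup: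
  assumes "0 < r"
  shows "r *\<^sub>R sup a b = sup (r *\<^sub>R a) (r *\<^sub>R (b::'a::{ordered_real_vector, lattice}))"
proof (rule antisym)
  show "sup (r *\<^sub>R a) (r *\<^sub>R b) \<le> r *\<^sub>R sup a b"
    using assms by (simp add: scaleR_left_mono)
  have "sup a b \<le> inverse r *\<^sub>R sup (r *\<^sub>R a) (r *\<^sub>R b)"
    using assms scaleR_left_mono[of "r *\<^sub>R a" "sup (r *\<^sub>R a) (r *\<^sub>R b)" "inverse r"]
      scaleR_left_mono[of "r *\<^sub>R b" "sup (r *\<^sub>R a) (r *\<^sub>R b)" "inverse r"] by auto
  from scaleR_left_mono[OF this, of r] assms
  show "r *\<^sub>R sup a b \<le> sup (r *\<^sub>R a) (r *\<^sub>R b)"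
    by simp
qed

lemma scaleR_inf:
  assumes "0 < r"
  shows "r *\<^sub>R inf a b = inf (r *\<^sub>R a) (r *\<^sub>R (b::'a::banach_lattice))"
proof -
  have "r *\<^sub>R inf a b = - (r *\<^sub>R sup (- a) (- b))"
    by (simp only: inf_eq_neg_sup[of a b] scaleR_minus_right)
  also have "\<dots> = - sup (- (r *\<^sub>R a)) (- (r *\<^sub>R b))"
    by (simp only: scaleR_sup[OF assms] scaleR_minus_right)
  also have "\<dots> = inf (r *\<^sub>R a) (r *\<^sub>R b)"
    by (simp only: inf_eq_neg_sup[symmetric])
  finally show ?thesis .
qed

lemma lmod_scaleR: "0 < r \<Longrightarrow> lmod (r *\<^sub>R (x::'a::banach_lattice)) = r *\<^sub>R lmod x"
  unfolding lmod_def by (simp add: scaleR_sup)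

lemma disjoint_elems_scaleR:
  assumes "0 < r" "0 < s" "disjoint_elems x (y::'a::banach_lattice)"
  shows "disjoint_elems (r *\<^sub>R x) (s *\<^sub>R y)"
proof -
  have "inf (r *\<^sub>R lmod x) (s *\<^sub>R lmod y) \<le> inf ((r + s) *\<^sub>R lmod x) ((r + s) *\<^sub>R lmod y)"
    using assms by (intro inf_mono scaleR_right_mono) (simp_all add: lmod_nonneg)
  also have "\<dots> = 0"
    using assms scaleR_inf[of "r + s" "lmod x" "lmod y"] by (simp add: disjoint_elems_def)
  finally have "inf (lmod (r *\<^sub>R x)) (lmod (s *\<^sub>R y)) \<le> 0"
    using assms by (simp add: lmod_scaleR)
  then show ?thesis
    unfolding disjoint_elems_def by (intro antisym) (simp_all add: lmod_nonneg)
qed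

lemma suminf_nonneg_ge_term:
  fixes t :: "nat \<Rightarrow> 'a::banach_lattice"
  assumes nonneg: "\<And>j. 0 \<le> t j" and "summable t"
  shows "t m \<le> suminf t"
proof -
  have "eventually (\<lambda>N. (\<Sum>j<N. t j) \<in> {x. t m \<le> x}) sequentially"
  proof (rule eventually_sequentiallyI[of "Suc m"])
    fix N assume "Suc m \<le> N"
    then have "(\<Sum>j<N. t j) = t m + (\<Sum>j\<in>{..<N} - {m}. t j)"
      by (simp add: sum.remove)
    then show "(\<Sum>j<N. t j) \<in> {x. t m \<le> x}"
      using nonneg by (simp add: sum_nonneg)
  qed
  then show ?thesis
    using Lim_in_closed_set[OF closed_atLeast_lattice _ _ summable_LIMSEQ[OF \<open>summable t\<close>]] by auto
qed

lemma archimedean_nonneg_eq_0: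
  assumes "0 \<le> (w::'a::banach_lattice)" "\<And>k::nat. of_nat k *\<^sub>R w \<le> h"
  shows "w = 0"
proof (rule ccontr)
  assume "w \<noteq> 0"
  then obtain k :: nat where k: "norm h < real k * norm w"
    using reals_Archimedean3[of "norm w"] by auto
  have "norm (of_nat k *\<^sub>R w) \<le> norm h"
    using assms by (intro norm_mono_nonneg) (auto intro: scaleR_nonneg_nonneg)
  then show False
    using k by simp
qed

section \<open>Order continuity\<close>

text \<open>The infimum of the set \<open>A\<close> of positive elements eventually dominating \<open>u\<close> is 0: a positive
  lower bound \<open>w\<close> of \<open>A\<close> satisfies \<open>k w + \<Sum>\<^sub>n\<^sub>\<in>\<^sub>F u\<^sub>n \<le> h\<close> for all \<open>k\<close> and finite \<open>F\<close>, by induction on \<open>k\<close>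
  since \<open>h - (k w + \<Sum>\<^sub>n\<^sub>\<in>\<^sub>F u\<^sub>n)\<close> lies in \<open>A\<close>.\<close>

lemma disjoint_eventual_bounds_inf_eq_0:
  fixes u :: "nat \<Rightarrow> 'a::banach_lattice"
  assumes nonneg: "\<And>n. 0 \<le> u n" and disj: "\<And>n m. n \<noteq> m \<Longrightarrow> inf (u n) (u m) = 0"
    and le: "\<And>n. u n \<le> h"
    and w_nonneg: "0 \<le> w"
    and w_lower: "\<And>a. 0 \<le> a \<Longrightarrow> (\<exists>N. \<forall>n\<ge>N. u n \<le> a) \<Longrightarrow> w \<le> a"
  shows "w = 0"
proof (rule archimedean_nonneg_eq_0[OF w_nonneg])
  have h_nonneg: "0 \<le> h"
    using nonneg[of 0] le[of 0] by simp
  have "of_nat k *\<^sub>R w + sum u F \<le> h" if "finite F" for k F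
    using that
  proof (induction k arbitrary: F)
    case 0
    then show ?case
      using sum_disjoint_le[OF nonneg disj le h_nonneg] by simp
  next
    case (Suc k)
    obtain N where N: "F \<subseteq> {..<N}"
      using finite_nat_bounded[OF Suc.prems] by auto
    have "w \<le> h - (of_nat k *\<^sub>R w + sum u F)"
    proof (rule w_lower)
      show "0 \<le> h - (of_nat k *\<^sub>R w + sum u F)"
        using Suc by simp
      have "u n \<le> h - (of_nat k *\<^sub>R w + sum u F)" if "N \<le> n" for n
      proof -
        have "n \<notin> F"
          using N that by auto
        then show ?thesis
          using Suc.IH[of "insert n F"] Suc.prems by (simp add: algebra_simps)
      qed
      then show "\<exists>N. \<forall>n\<ge>N. u n \<le> h - (of_nat k *\<^sub>R w + sum u F)"
        by blast
    qed
    then show ?case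
      by (simp add: algebra_simps)
  qed
  from this[of "{}"] show "of_nat k *\<^sub>R w \<le> h" for k
    by simp
qed

lemma order_continuous_disjoint_bounded_null:
  fixes u :: "nat \<Rightarrow> 'a::banach_lattice"
  assumes oc: "order_continuous TYPE('a)"
    and nonneg: "\<And>n. 0 \<le> u n" and disj: "\<And>n m. n \<noteq> m \<Longrightarrow> inf (u n) (u m) = 0"
    and le: "\<And>n. u n \<le> h"
  shows "(\<lambda>n. norm (u n)) \<longlonglongrightarrow> 0"
proof -
  define A where "A = {a::'a. 0 \<le> a \<and> (\<exists>N. \<forall>n\<ge>N. u n \<le> a)}"
  have "0 \<le> h"
    using nonneg[of 0] le[of 0] by (rule order.trans)
  then have nonempty: "A \<noteq> {}"
    using le unfolding A_def by blast
  have directed: "\<forall>x\<in>A. \<forall>y\<in>A. \<exists>z\<in>A. z \<le> x \<and> z \<le> y"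
  proof (intro ballI)
    fix x y assume "x \<in> A" "y \<in> A"
    then obtain N1 N2 where "\<forall>n\<ge>N1. u n \<le> x" "\<forall>n\<ge>N2. u n \<le> y" "0 \<le> x" "0 \<le> y"
      unfolding A_def by blast
    then have "inf x y \<in> A"
      unfolding A_def by (auto intro!: exI[of _ "max N1 N2"])
    then show "\<exists>z\<in>A. z \<le> x \<and> z \<le> y"
      by (intro bexI[of _ "inf x y"]) auto
  qed
  have A_nonneg: "\<forall>x\<in>A. 0 \<le> x"
    unfolding A_def by blast
  have A_inf: "\<forall>z. (\<forall>x\<in>A. z \<le> x) \<longrightarrow> z \<le> 0"
  proof (intro allI impI)
    fix z assume "\<forall>x\<in>A. z \<le> x"
    then have "sup z 0 = 0"
      by (intro disjoint_eventual_bounds_inf_eq_0[OF nonneg disj le]) (auto simp: A_def)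
    then show "z \<le> 0"
      by (metis sup.cobounded1)
  qed
  have small: "\<forall>\<epsilon>>0. \<exists>x\<in>A. \<forall>y\<in>A. y \<le> x \<longrightarrow> norm y < \<epsilon>"
    using spec[OF oc[unfolded order_continuous_def], of A] nonempty directed A_nonneg A_inf by blast
  show ?thesis
  proof (rule LIMSEQ_I)
    fix r :: real assume "0 < r"
    then obtain a where "a \<in> A" and "norm a < r"
      using small by blast
    then obtain N where N: "\<forall>n\<ge>N. u n \<le> a"
      unfolding A_def by blast
    have "norm (u n) < r" if "N \<le> n" for n
      using norm_mono_nonneg[OF nonneg N[rule_format, OF that]] \<open>norm a < r\<close> by linarith
    then show "\<exists>N. \<forall>n\<ge>N. norm (norm (u n) - 0) < r"
      by auto
  qed
qed

lemma order_continuous_disjoint_seq_un_null: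
  fixes f :: "nat \<Rightarrow> 'a::banach_lattice"
  assumes oc: "order_continuous TYPE('a)" and "disjoint_seq f"
  shows "un_null f sequentially"
  unfolding un_null_def
proof (intro allI impI)
  fix h :: 'a and \<epsilon> :: real
  assume "0 \<le> h" "0 < \<epsilon>"
  have "inf (inf (lmod (f n)) h) (inf (lmod (f m)) h) = 0" if "n \<noteq> m" for n m
  proof -
    have "inf (inf (lmod (f n)) h) (inf (lmod (f m)) h) \<le> inf (lmod (f n)) (lmod (f m))"
      by (meson inf_mono inf.cobounded1)
    also have "\<dots> = 0"
      using \<open>disjoint_seq f\<close> that unfolding disjoint_seq_def disjoint_elems_def by auto
    finally show ?thesis
      using \<open>0 \<le> h\<close> by (intro antisym) (simp_all add: lmod_nonneg)
  qed
  then have "(\<lambda>n. norm (inf (lmod (f n)) h)) \<longlonglongrightarrow> 0"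
    using \<open>0 \<le> h\<close> by (intro order_continuous_disjoint_bounded_null[OF oc, of _ h]) (simp_all add: lmod_nonneg)
  then show "\<forall>\<^sub>F n in sequentially. norm (inf (lmod (f n)) h) < \<epsilon>"
    using \<open>0 < \<epsilon>\<close> by (rule order_tendstoD)
qed

section \<open>Disjoint sequences near almost disjoint ones\<close>

lemma later_overlaps_dominated:
  fixes f H :: "nat \<Rightarrow> 'a::banach_lattice"
  assumes H_upper: "\<And>k n. k < n \<Longrightarrow> lmod (f k) \<le> H n"
    and small: "\<And>n. norm (inf (lmod (f n)) (H n)) \<le> (1/4)^n"
  obtains S where "\<And>n. 0 \<le> S n" and "\<And>n m. n < m \<Longrightarrow> inf (lmod (f n)) (lmod (f m)) \<le> S n"
    and "\<And>n. norm (S n) \<le> 2 * (1/2)^n"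
proof -
  define t where "t n j = (if n < j then inf (lmod (f n)) (lmod (f j)) else 0)" for n j
  have t_nonneg: "0 \<le> t n j" for n j
    unfolding t_def by (simp add: lmod_nonneg)
  have t_norm: "norm (t n j) \<le> (1/2)^n * (1/2)^j" for n j
  proof (cases "n < j")
    case True
    have overlap: "inf (lmod (f n)) (lmod (f j)) \<le> inf (lmod (f j)) (H j)"
      using H_upper[OF True] by (simp add: inf.coboundedI1 le_infI2 inf_commute)
    have "norm (t n j) \<le> norm (inf (lmod (f j)) (H j))"
      using norm_mono_nonneg[OF _ overlap] True by (simp add: t_def lmod_nonneg)
    also have "\<dots> \<le> (1/4)^j"
      by (rule small)
    also have "(1/4::real)^j = (1/2)^j * (1/2)^j"
      by (simp add: power_mult_distrib[symmetric])
    also have "\<dots> \<le> (1/2)^n * (1/2)^j"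
      using True by (intro mult_right_mono power_decreasing) auto
    finally show ?thesis .
  qed (simp add: t_def)
  have geometric: "summable (\<lambda>j. (1/2::real)^n * (1/2)^j)" for n
    by (intro summable_mult summable_geometric) simp
  have t_summable: "summable (t n)" for n
    using summable_comparison_test'[OF geometric t_norm] .
  have S_upper: "t n m \<le> suminf (t n)" for n m
    by (rule suminf_nonneg_ge_term[OF t_nonneg t_summable])
  have "0 \<le> suminf (t n)" for n
    using t_nonneg[of n n] S_upper[of n n] by (rule order.trans)
  moreover have "inf (lmod (f n)) (lmod (f m)) \<le> suminf (t n)" if "n < m" for n m
    using S_upper[of n m] that unfolding t_def by simp
  moreover have "norm (suminf (t n)) \<le> 2 * (1/2)^n" for n
  proof -
    have "norm (suminf (t n)) \<le> (\<Sum>j. (1/2::real)^n * (1/2)^j)"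
      by (rule norm_suminf_le[OF t_norm geometric])
    also have "\<dots> = 2 * (1/2)^n"
      by (subst suminf_mult) (simp_all add: suminf_geometric)
    finally show ?thesis .
  qed
  ultimately show thesis
    by (rule that)
qed

lemma almost_disjoint_seq_near_disjoint_seq:
  fixes f H :: "nat \<Rightarrow> 'a::banach_lattice"
  assumes H_nonneg: "\<And>n. 0 \<le> H n"
    and H_upper: "\<And>k n. k < n \<Longrightarrow> lmod (f k) \<le> H n"
    and small: "\<And>n. norm (inf (lmod (f n)) (H n)) \<le> (1/4)^n"
  obtains g where "disjoint_seq g" and "(\<lambda>n. norm (f n - g n)) \<longlonglongrightarrow> 0"
proof -
  obtain S where S_nonneg: "\<And>n. 0 \<le> S n"
    and S_upper: "\<And>n m. n < m \<Longrightarrow> inf (lmod (f n)) (lmod (f m)) \<le> S n"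
    and S_norm: "\<And>n. norm (S n) \<le> 2 * (1/2)^n"
    using later_overlaps_dominated[OF H_upper small] by blast
  define c where "c n = H n + S n" for n
  have c_nonneg: "0 \<le> c n" for n
    unfolding c_def using H_nonneg S_nonneg by (rule add_nonneg_nonneg)
  define g where "g n = f n - lattice_trunc (f n) (c n)" for n
  have "disjoint_seq g"
    unfolding disjoint_seq_def disjoint_elems_def g_def
  proof (intro allI impI disjoint_diff_lattice_trunc[OF c_nonneg])
    show "inf (lmod (f n)) (lmod (f m)) \<le> c n" if "n < m" for n m
      using S_upper[OF that] H_nonneg[of n] unfolding c_def by (simp add: add_increasing)
    show "lmod (f n) \<le> c m" if "n < m" for n m
      using H_upper[OF that] S_nonneg[of m] unfolding c_def by (simp add: add_increasing2)
  qed
  moreover have close: "norm (f n - g n) \<le> 3 * (1/2)^n" for n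
  proof -
    have "norm (f n - g n) \<le> norm (inf (lmod (f n)) (c n))"
      unfolding g_def using lmod_lattice_trunc_le[OF c_nonneg] by (simp add: norm_le_if_lmod_le)
    also have "\<dots> \<le> norm (inf (lmod (f n)) (H n) + S n)"
    proof (rule norm_mono_nonneg)
      show "0 \<le> inf (lmod (f n)) (c n)"
        using c_nonneg by (simp add: lmod_nonneg)
      have "inf (lmod (f n)) (c n) \<le> inf (lmod (f n) + S n) (H n + S n)"
        unfolding c_def using S_nonneg by (intro inf_mono) (simp_all add: add_increasing2)
      then show "inf (lmod (f n)) (c n) \<le> inf (lmod (f n)) (H n) + S n"
        by (simp add: add_inf_distrib_right)
    qed
    also have "\<dots> \<le> (1/4)^n + 2 * (1/2)^n"
      using norm_triangle_ineq[of "inf (lmod (f n)) (H n)" "S n"] small[of n] S_norm[of n] by linarith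
    also have "\<dots> \<le> 3 * (1/2)^n"
      using power_mono[of "1/4" "1/2::real" n] by simp
    finally show ?thesis .
  qed
  have geometric_null: "(\<lambda>n. 3 * (1/2::real)^n) \<longlonglongrightarrow> 0"
    by (intro tendsto_mult_right_zero LIMSEQ_power_zero) simp
  have "(\<lambda>n. norm (f n - g n)) \<longlonglongrightarrow> 0"
    by (rule Lim_null_comparison[OF always_eventually geometric_null]) (simp add: close)
  ultimately show thesis
    using that by blast
qed

lemma not_DNS_if_near_disjoint_seq:
  fixes T :: "'a::banach_lattice \<Rightarrow> 'b::real_normed_vector"
  assumes "bounded_linear T" and unit: "\<And>n. norm (f n) = 1" and "disjoint_seq g"
    and near: "(\<lambda>n. norm (f n - g n)) \<longlonglongrightarrow> 0" and small: "(\<lambda>n. norm (T (f n))) \<longlonglongrightarrow> 0"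
  shows "\<not> DNS T"
proof -
  have "(\<lambda>n. norm (g n) - 1) \<longlonglongrightarrow> 0"
  proof (rule Lim_null_comparison[OF always_eventually near], rule allI)
    show "norm (norm (g n) - 1) \<le> norm (f n - g n)" for n
      using norm_triangle_ineq3[of "f n" "g n"] unit[of n] by (simp add: abs_minus_commute)
  qed
  then have g_norm: "(\<lambda>n. norm (g n)) \<longlonglongrightarrow> 1"
    by (rule LIM_zero_cancel)
  obtain K where K: "\<And>x. norm (T x) \<le> norm x * K"
    using bounded_linear.bounded[OF \<open>bounded_linear T\<close>] by blast
  have "(\<lambda>n. norm (T (g n))) \<longlonglongrightarrow> 0"
  proof (rule Lim_null_comparison[OF always_eventually], rule allI)
    show "norm (norm (T (g n))) \<le> norm (T (f n)) + norm (f n - g n) * K" for n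
      using norm_triangle_ineq4[of "T (f n)" "T (f n - g n)"] K[of "f n - g n"]
        linear_diff[OF bounded_linear.linear[OF \<open>bounded_linear T\<close>], of "f n" "f n - g n"] by simp
    show "(\<lambda>n. norm (T (f n)) + norm (f n - g n) * K) \<longlonglongrightarrow> 0"
      using tendsto_add_zero[OF small tendsto_mult_left_zero[OF near]] .
  qed
  obtain N where N: "\<And>n. N \<le> n \<Longrightarrow> 1/2 < norm (g n)"
    using order_tendstoD(1)[OF g_norm, of "1/2"] unfolding eventually_sequentially by auto
  define e where "e k = (1 / norm (g (k + N))) *\<^sub>R g (k + N)" for k
  have g_pos: "0 < norm (g (k + N))" for k
    using N[of "k + N"] by linarith
  have "norm (e k) = 1" for k
    unfolding e_def using g_pos[of k] by simp
  moreover have "disjoint_seq e"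
    using \<open>disjoint_seq g\<close> g_pos unfolding disjoint_seq_def e_def
    by (auto intro!: disjoint_elems_scaleR)
  moreover have "(\<lambda>k. norm (T (e k))) \<longlonglongrightarrow> 0"
  proof -
    have "(\<lambda>k. norm (T (g (k + N))) / norm (g (k + N))) \<longlonglongrightarrow> 0 / 1"
      using \<open>(\<lambda>n. norm (T (g n))) \<longlonglongrightarrow> 0\<close> g_norm
      by (intro tendsto_divide LIMSEQ_ignore_initial_segment) simp_all
    moreover have "norm (T (e k)) = norm (T (g (k + N))) / norm (g (k + N))" for k
      unfolding e_def using g_pos[of k] linear.scaleR[OF bounded_linear.linear[OF \<open>bounded_linear T\<close>]] by simp
    ultimately show ?thesis
      by simp
  qed
  ultimately show ?thesis
    unfolding DNS_def by blast
qed

section \<open>Characterisations of DNS operators\<close>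

text \<open>Condition (iv): \<open>T\<close> is bounded below on the part of the unit sphere lying in an
  un-neighbourhood of 0.\<close>

definition un_bounded_below :: "('a::banach_lattice \<Rightarrow> 'b::real_normed_vector) \<Rightarrow> bool" where
  "un_bounded_below T \<longleftrightarrow> (\<exists>\<epsilon>>0. \<exists>\<delta>>0. \<exists>h::'a. 0 \<le> h \<and>
     (\<forall>f. norm f = 1 \<and> norm (inf (lmod f) h) < \<epsilon> \<longrightarrow> norm (T f) \<ge> \<delta>))"

text \<open>Choosing \<open>f\<^sub>n\<close> against \<open>h = H\<^sub>n = |f\<^sub>0| + \<dots> + |f\<^sub>n\<^sub>-\<^sub>1|\<close> with \<open>\<epsilon> = \<delta> = 4\<^sup>-\<^sup>n\<close>.\<close>

lemma almost_disjoint_seq_if_not_un_bounded_below: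
  fixes T :: "'a::banach_lattice \<Rightarrow> 'b::real_normed_vector"
  assumes "\<not> un_bounded_below T"
  obtains H f :: "nat \<Rightarrow> 'a"
  where "\<And>n. 0 \<le> H n" "\<And>k n. k < n \<Longrightarrow> lmod (f k) \<le> H n" "\<And>n. norm (f n) = 1"
    "\<And>n. norm (inf (lmod (f n)) (H n)) \<le> (1/4)^n" "\<And>n. norm (T (f n)) \<le> (1/4)^n"
proof -
  have "\<exists>f. norm f = 1 \<and> norm (inf (lmod f) h) < (1/4::real)^n \<and> norm (T f) < (1/4)^n"
    if "0 \<le> h" for h n
  proof -
    have "(0::real) < (1/4)^n"
      by simp
    then show ?thesis
      using assms that unfolding un_bounded_below_def not_le[symmetric] by blast
  qed
  then obtain ch where ch: "\<And>h n. 0 \<le> h \<Longrightarrow>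
      norm (ch h n) = 1 \<and> norm (inf (lmod (ch h n)) h) < (1/4::real)^n \<and> norm (T (ch h n)) < (1/4)^n"
    by metis
  define H where "H = rec_nat 0 (\<lambda>n Hn. Hn + lmod (ch Hn n))"
  define f where "f n = ch (H n) n" for n
  have H_0: "H 0 = 0" and H_Suc: "H (Suc n) = H n + lmod (f n)" for n
    unfolding H_def f_def by simp_all
  have H_nonneg: "0 \<le> H n" for n
    by (induction n) (simp_all add: H_0 H_Suc lmod_nonneg)
  have "lmod (f k) \<le> H n" if "k < n" for k n
    using that
  proof (induction n)
    case (Suc n)
    show ?case
    proof (cases "k = n")
      case True
      then show ?thesis
        using H_nonneg[of n] by (simp add: H_Suc add_increasing)
    next
      case False
      then have "lmod (f k) \<le> H n"
        using Suc by simp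
      then show ?thesis
        using lmod_nonneg[of "f n"] by (simp add: H_Suc add_increasing2)
    qed
  qed simp
  moreover have "norm (f n) = 1" "norm (inf (lmod (f n)) (H n)) \<le> (1/4)^n" "norm (T (f n)) \<le> (1/4)^n"
    for n
    using ch[OF H_nonneg[of n], of n] unfolding f_def by auto
  ultimately show thesis
    using that H_nonneg by blast
qed

lemma DNS_imp_un_bounded_below:
  fixes T :: "'a::banach_lattice \<Rightarrow> 'b::real_normed_vector"
  assumes "bounded_linear T" and "DNS T"
  shows "un_bounded_below T"
proof (rule ccontr)
  assume "\<not> un_bounded_below T"
  then obtain H f :: "nat \<Rightarrow> 'a"
    where H_nonneg: "\<And>n. 0 \<le> H n" and H_upper: "\<And>k n. k < n \<Longrightarrow> lmod (f k) \<le> H n"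
      and unit: "\<And>n. norm (f n) = 1" and H_small: "\<And>n. norm (inf (lmod (f n)) (H n)) \<le> (1/4)^n"
      and small: "\<And>n. norm (T (f n)) \<le> (1/4)^n"
    using almost_disjoint_seq_if_not_un_bounded_below by metis
  obtain g where "disjoint_seq g" "(\<lambda>n. norm (f n - g n)) \<longlonglongrightarrow> 0"
    using almost_disjoint_seq_near_disjoint_seq[OF H_nonneg H_upper H_small] by blast
  moreover have "(\<lambda>n. norm (T (f n))) \<longlonglongrightarrow> 0"
    by (rule Lim_null_comparison[OF always_eventually LIMSEQ_power_zero[of "1/4::real"]]) (simp_all add: small)
  ultimately have "\<not> DNS T"
    using not_DNS_if_near_disjoint_seq[OF \<open>bounded_linear T\<close>, of f g] unit by blast
  then show False
    using \<open>DNS T\<close> by contradiction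
qed

lemma un_bounded_below_imp_strictly_DNS:
  fixes T :: "'a::banach_lattice \<Rightarrow> 'b::real_normed_vector"
  assumes oc: "order_continuous TYPE('a)" and "un_bounded_below T"
  shows "strictly_DNS T"
proof -
  obtain \<epsilon> \<delta> h where "0 < \<epsilon>" "0 < \<delta>" "0 \<le> h"
    and bound: "\<And>f. norm f = 1 \<Longrightarrow> norm (inf (lmod f) h) < \<epsilon> \<Longrightarrow> norm (T f) \<ge> \<delta>"
    using assms(2) unfolding un_bounded_below_def by blast
  have "False" if unit: "\<And>n. norm (f n) = 1" and "disjoint_seq f" and small: "\<And>n. norm (T (f n)) \<le> \<delta>/2"
    for f :: "nat \<Rightarrow> 'a"
  proof -
    have "eventually (\<lambda>n. norm (inf (lmod (f n)) h) < \<epsilon>) sequentially"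
      using order_continuous_disjoint_seq_un_null[OF oc \<open>disjoint_seq f\<close>] \<open>0 \<le> h\<close> \<open>0 < \<epsilon>\<close>
      unfolding un_null_def by blast
    then obtain n where "norm (inf (lmod (f n)) h) < \<epsilon>"
      by (auto dest: eventually_happens)
    then show False
      using bound[OF unit] small[of n] \<open>0 < \<delta>\<close> by force
  qed
  then show ?thesis
    unfolding strictly_DNS_def using \<open>0 < \<delta>\<close> by (intro exI[of _ "\<delta>/2"]) auto
qed

lemma strictly_DNS_imp_DNS:
  fixes T :: "'a::banach_lattice \<Rightarrow> 'b::real_normed_vector"
  assumes "strictly_DNS T"
  shows "DNS T"
  unfolding DNS_def
proof
  obtain \<delta> where "0 < \<delta>" and no_seq: "\<not> (\<exists>f :: nat \<Rightarrow> 'a. (\<forall>n. norm (f n) = 1) \<and> disjoint_seq f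
      \<and> (\<forall>n. norm (T (f n)) \<le> \<delta>))"
    using assms unfolding strictly_DNS_def by blast
  assume "\<exists>f. (\<forall>n. norm (f n) = 1) \<and> disjoint_seq f \<and> (\<lambda>n. norm (T (f n))) \<longlonglongrightarrow> 0"
  then obtain f :: "nat \<Rightarrow> 'a" where unit: "\<forall>n. norm (f n) = 1" and "disjoint_seq f"
    and T_null: "(\<lambda>n. norm (T (f n))) \<longlonglongrightarrow> 0"
    by blast
  have "eventually (\<lambda>n. norm (T (f n)) < \<delta>) sequentially"
    using order_tendstoD(2)[OF T_null \<open>0 < \<delta>\<close>] .
  then obtain N where N: "\<And>n. N \<le> n \<Longrightarrow> norm (T (f n)) < \<delta>"
    unfolding eventually_sequentially by blast
  have "disjoint_seq (\<lambda>n. f (n + N))"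
    using \<open>disjoint_seq f\<close> unfolding disjoint_seq_def by simp
  moreover have "norm (T (f (n + N))) \<le> \<delta>" for n
    using N[of "n + N"] by simp
  ultimately have "\<exists>f :: nat \<Rightarrow> 'a. (\<forall>n. norm (f n) = 1) \<and> disjoint_seq f \<and> (\<forall>n. norm (T (f n)) \<le> \<delta>)"
    using unit by (intro exI[of _ "\<lambda>n. f (n + N)"]) simp
  then show False
    using no_seq by blast
qed

lemma un_bounded_below_no_un_null_net:
  fixes T :: "'a::banach_lattice \<Rightarrow> 'b::real_normed_vector" and x :: "'i \<Rightarrow> 'a"
  assumes "un_bounded_below T" and "G \<noteq> bot"
    and unit: "\<And>i. norm (x i) = 1" and "un_null x G" and "((\<lambda>i. norm (T (x i))) \<longlongrightarrow> 0) G"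
  shows False
proof -
  obtain \<epsilon> \<delta> h where "0 < \<epsilon>" "0 < \<delta>" "0 \<le> h"
    and bound: "\<And>f. norm f = 1 \<Longrightarrow> norm (inf (lmod f) h) < \<epsilon> \<Longrightarrow> norm (T f) \<ge> \<delta>"
    using assms(1) unfolding un_bounded_below_def by blast
  have "eventually (\<lambda>i. norm (inf (lmod (x i)) h) < \<epsilon>) G"
    using \<open>un_null x G\<close> \<open>0 \<le> h\<close> \<open>0 < \<epsilon>\<close> unfolding un_null_def by blast
  moreover have "eventually (\<lambda>i. norm (T (x i)) < \<delta>) G"
    using order_tendstoD(2)[OF assms(5) \<open>0 < \<delta>\<close>] .
  ultimately have "eventually (\<lambda>i. False) G"
    by eventually_elim (use bound unit in force)
  then show False
    using \<open>G \<noteq> bot\<close> by (simp add: eventually_False)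
qed

lemma DNS_if_no_un_null_seq:
  fixes T :: "'a::banach_lattice \<Rightarrow> 'b::real_normed_vector"
  assumes oc: "order_continuous TYPE('a)"
    and "\<not> (\<exists>x :: nat \<Rightarrow> 'a. (\<forall>n. norm (x n) = 1) \<and> un_null x sequentially
              \<and> (\<lambda>n. norm (T (x n))) \<longlonglongrightarrow> 0)"
  shows "DNS T"
  unfolding DNS_def
proof
  assume "\<exists>f. (\<forall>n. norm (f n) = 1) \<and> disjoint_seq f \<and> (\<lambda>n. norm (T (f n))) \<longlonglongrightarrow> 0"
  then obtain f :: "nat \<Rightarrow> 'a" where "\<forall>n. norm (f n) = 1" "disjoint_seq f"
    "(\<lambda>n. norm (T (f n))) \<longlonglongrightarrow> 0"
    by blast
  moreover have "un_null f sequentially"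
    using oc \<open>disjoint_seq f\<close> by (rule order_continuous_disjoint_seq_un_null)
  ultimately show False
    using assms(2) by blast
qed

lemma open_un_bounded_below:
  "open {S :: 'a::banach_lattice \<Rightarrow>\<^sub>L 'b::real_normed_vector. un_bounded_below (blinfun_apply S)}"
  unfolding open_dist
proof (intro ballI)
  fix S :: "'a \<Rightarrow>\<^sub>L 'b"
  assume "S \<in> {S. un_bounded_below (blinfun_apply S)}"
  then obtain \<epsilon> \<delta> h where "0 < \<epsilon>" "0 < \<delta>" "0 \<le> h"
    and bound: "\<And>f. norm f = 1 \<Longrightarrow> norm (inf (lmod f) h) < \<epsilon> \<Longrightarrow> norm (blinfun_apply S f) \<ge> \<delta>"
    unfolding un_bounded_below_def by blast
  have "un_bounded_below (blinfun_apply R)" if "dist R S < \<delta>/2" for R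
  proof -
    have "\<delta>/2 \<le> norm (blinfun_apply R f)" if f: "norm f = 1" "norm (inf (lmod f) h) < \<epsilon>" for f
    proof -
      have "norm (blinfun_apply (R - S) f) \<le> norm (R - S) * norm f"
        by (rule norm_blinfun)
      moreover have "norm (R - S) < \<delta>/2"
        using \<open>dist R S < \<delta>/2\<close> by (simp add: dist_norm)
      moreover have "norm (blinfun_apply S f) \<le> norm (blinfun_apply R f) + norm (blinfun_apply (R - S) f)"
        using norm_triangle_ineq4[of "blinfun_apply R f" "blinfun_apply (R - S) f"]
        by (simp add: blinfun.diff_left)
      ultimately show ?thesis
        using bound[OF f] f(1) by simp
    qed
    moreover have "0 < \<delta>/2"
      using \<open>0 < \<delta>\<close> by simp
    ultimately show ?thesis
      unfolding un_bounded_below_def using \<open>0 < \<epsilon>\<close> \<open>0 \<le> h\<close> by blast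
  qed
  then show "\<exists>e>0. \<forall>R. dist R S < e \<longrightarrow> R \<in> {S. un_bounded_below (blinfun_apply S)}"
    using \<open>0 < \<delta>\<close> by (intro exI[of _ "\<delta>/2"]) auto
qed

lemma DNS_iff_un_bounded_below:
  fixes T :: "'a::banach_lattice \<Rightarrow> 'b::real_normed_vector"
  assumes "order_continuous TYPE('a)" and "bounded_linear T"
  shows "DNS T \<longleftrightarrow> un_bounded_below T"
  using DNS_imp_un_bounded_below[OF assms(2)] strictly_DNS_imp_DNS
    un_bounded_below_imp_strictly_DNS[OF assms(1)] by blast

theorem theorem5p7:
  fixes T :: "'f::banach_lattice \<Rightarrow>\<^sub>L 'e::banach"
  assumes "order_continuous TYPE('f)"
  shows "(DNS (blinfun_apply T) \<longleftrightarrow> strictly_DNS (blinfun_apply T))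
    \<and> (DNS (blinfun_apply T) \<longleftrightarrow>
         \<not> (\<exists>x :: nat \<Rightarrow> 'f. (\<forall>n. norm (x n) = 1) \<and> un_null x sequentially
              \<and> (\<lambda>n. norm (blinfun_apply T (x n))) \<longlonglongrightarrow> 0))
    \<and> (DNS (blinfun_apply T) \<longrightarrow>
         (\<forall>(G :: 'i filter) (x :: 'i \<Rightarrow> 'f). G \<noteq> bot \<longrightarrow>
            \<not> ((\<forall>i. norm (x i) = 1) \<and> un_null x G
                 \<and> ((\<lambda>i. norm (blinfun_apply T (x i))) \<longlongrightarrow> 0) G)))
    \<and> (DNS (blinfun_apply T) \<longleftrightarrow>
         (\<exists>\<epsilon>>0. \<exists>\<delta>>0. \<exists>h::'f. 0 \<le> h \<and>
            (\<forall>f. norm f = 1 \<and> norm (inf (lmod f) h) < \<epsilon> \<longrightarrow> norm (blinfun_apply T f) \<ge> \<delta>)))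
    \<and> open {S :: 'f \<Rightarrow>\<^sub>L 'e. DNS (blinfun_apply S)}"
proof -
  have DNS_iff: "DNS (blinfun_apply S) \<longleftrightarrow> un_bounded_below (blinfun_apply S)" for S :: "'f \<Rightarrow>\<^sub>L 'e"
    using DNS_iff_un_bounded_below[OF assms blinfun.bounded_linear_right] .
  have "DNS (blinfun_apply T) \<longleftrightarrow> strictly_DNS (blinfun_apply T)"
    using DNS_iff strictly_DNS_imp_DNS un_bounded_below_imp_strictly_DNS[OF assms] by blast
  moreover have "DNS (blinfun_apply T) \<longleftrightarrow>
      \<not> (\<exists>x :: nat \<Rightarrow> 'f. (\<forall>n. norm (x n) = 1) \<and> un_null x sequentially
           \<and> (\<lambda>n. norm (blinfun_apply T (x n))) \<longlonglongrightarrow> 0)"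
    using DNS_iff un_bounded_below_no_un_null_net[of _ sequentially] DNS_if_no_un_null_seq[OF assms]
    by (metis sequentially_bot)
  moreover have "\<not> ((\<forall>i. norm (x i) = 1) \<and> un_null x G \<and> ((\<lambda>i. norm (blinfun_apply T (x i))) \<longlongrightarrow> 0) G)"
    if "DNS (blinfun_apply T)" "G \<noteq> bot" for G :: "'i filter" and x :: "'i \<Rightarrow> 'f"
    using that DNS_iff un_bounded_below_no_un_null_net by blast
  moreover have "open {S :: 'f \<Rightarrow>\<^sub>L 'e. DNS (blinfun_apply S)}"
    using open_un_bounded_below by (simp add: DNS_iff)
  ultimately show ?thesis
    using DNS_iff[of T] unfolding un_bounded_below_def by blast
qed

end
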